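(* Let $d\in\mathbb{N}$, $d\ge1$, and let $\alpha\in E_d$ with $\alpha\neq0$. There exists exactly one quad $(i;a,b,c)$ representing $\alpha$ such that $$d-2f(i+1)<af(i)+bf(i+1)+cf(i+2)\le d,$$ and for this quad $s_d(\alpha)=a+b+c$.
   Context: Let $f\colon\mathbb{Z}\to\mathbb{Z}$ be defined by $f(0)=f(1)=1$, $f(i+2)=f(i+1)+f(i)$ for all $i\in\mathbb{Z}$; $\gamma=(1+\sqrt5)/2$; $\mathbb{Z}[\gamma]=\mathbb{Z}\oplus\mathbb{Z}\gamma^{-1}$. For $d\in\mathbb{N}$, $E_d$ is the set of $\alpha\in\mathbb{Z}[\gamma]$ such that $\alpha=\sum_{k=1}^s\gamma^{-i_k}$ and $\sum_{k=1}^sf(i_k)\le d$ for some $s\in\mathbb{N}$ and integers $0\le i_1\le\dots\le i_s$ (empty sum $=0$); $s_d(\alpha)$ is the largest such $s$. A quad is a tuple $(i;a,b,c)$ of non-negative integers with $a\ge1$; it represents $\alpha$ if $\alpha=a\gamma^{-i}+b\gamma^{-i-1}+c\gamma^{-i-2}$. *)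

theory Defs
  imports Complex_Main
begin

text \<open>The sequence f restricted to nonnegative arguments (only those are used):
  f 0 = f 1 = 1, f (i+2) = f (i+1) + f i.\<close>
fun fibf :: "nat \<Rightarrow> int" where
  "fibf 0 = 1"
| "fibf (Suc 0) = 1"
| "fibf (Suc (Suc n)) = fibf (Suc n) + fibf n"

definition gam :: real where
  "gam = (1 + sqrt 5) / 2"

text \<open>Elements of Z[gamma] are represented as real numbers.
  A d-admissible representation: a non-decreasing list of exponents i_1 <= ... <= i_s
  with alpha = sum gamma^(-i_k) and sum f(i_k) <= d.\<close>
definition admissible_rep :: "nat \<Rightarrow> real \<Rightarrow> nat list \<Rightarrow> bool" where
  "admissible_rep d \<alpha> is \<longleftrightarrow> sorted is \<and>
     \<alpha> = (\<Sum>k\<leftarrow>is. inverse gam ^ k) \<and> (\<Sum>k\<leftarrow>is. fibf k) \<le> int d"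

definition E :: "nat \<Rightarrow> real set" where
  "E d = {\<alpha>. \<exists>is. admissible_rep d \<alpha> is}"

definition s :: "nat \<Rightarrow> real \<Rightarrow> nat" where
  "s d \<alpha> = (GREATEST n. \<exists>is. admissible_rep d \<alpha> is \<and> length is = n)"

definition quad_represents :: "nat \<times> nat \<times> nat \<times> nat \<Rightarrow> real \<Rightarrow> bool" where
  "quad_represents q \<alpha> \<longleftrightarrow> (case q of (i, a, b, c) \<Rightarrow>
     a \<ge> 1 \<and> \<alpha> = real a * inverse gam ^ i + real b * inverse gam ^ (i + 1)
                  + real c * inverse gam ^ (i + 2))"

definition quad_fits :: "nat \<Rightarrow> nat \<times> nat \<times> nat \<times> nat \<Rightarrow> bool" where
  "quad_fits d q \<longleftrightarrow> (case q of (i, a, b, c) \<Rightarrow>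
     int d - 2 * fibf (i + 1) < int a * fibf i + int b * fibf (i + 1) + int c * fibf (i + 2)
     \<and> int a * fibf i + int b * fibf (i + 1) + int c * fibf (i + 2) \<le> int d)"

end

theory Submission
  imports Defs
begin

(* Write rho = 1/gamma, so rho^k = rho^(k+1) + rho^(k+2) and rho is irrational.
   A multiset of exponents is a list xs; its value is val xs = sum rho^k, its cost is
   cost xs = sum f(k).  A weight v : nat => int with v k = v (k+1) + v (k+2) is additive on
   values: because 1 and rho are linearly independent over Q, sum_{k in xs} v k depends only on
   val xs.  For a quad at level i we choose the "potential" weight with v k + f k = 2 f(i+1) at
   k = i, i+1, i+2, and show v k + f k >= 2 f(i+1) for every k, strictly for k < i.  Summing over
   any representation ys of the same value bounds the number of terms of ys by a + b + c as soon
   as cost ys < cost(quad) + 2 f(i+1); this gives the formula for s_d and, played off for two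
   levels, the uniqueness of the fitting quad.  For existence, the lowest level admitting a quad
   yields a quad no more expensive than a given representation, and replacing one term rho^i by
   rho^(i+1) + rho^(i+2) raises the cost by exactly 2 f(i+1) until the quad fits below d. *)

section \<open>The number rho = 1/gamma\<close>

definition rho :: real where
  "rho = inverse gam"

lemma rho_eq: "rho = (sqrt 5 - 1) / 2"
proof -
  have "(1 + sqrt 5) * (sqrt 5 - 1) = 4" by (simp add: algebra_simps)
  moreover have "1 + sqrt 5 \<noteq> 0" using real_sqrt_ge_zero[of 5] by linarith
  ultimately show ?thesis unfolding rho_def gam_def by (simp add: field_simps)
qed

lemma rho_pos: "0 < rho"
  unfolding rho_eq by simp

lemma rho_lt_1: "rho < 1"
proof -
  have "sqrt 5 < 3" by (rule real_less_lsqrt) simp_all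
  then show ?thesis unfolding rho_eq by simp
qed

lemma rho_sq: "rho\<^sup>2 = 1 - rho"
  unfolding rho_eq by (simp add: power2_eq_square field_simps)

lemma rho_pow_split: "rho ^ k = rho ^ Suc k + rho ^ Suc (Suc k)"
proof -
  have "rho ^ Suc k + rho ^ Suc (Suc k) = rho ^ k * (rho + rho\<^sup>2)"
    by (simp add: algebra_simps power2_eq_square)
  then show ?thesis using rho_sq by simp
qed

text \<open>rho is irrational: if rho = r/m then rho = 1/(1 + rho) gives rho = (m - r)/r with
  0 < r < m, an infinite descent.\<close>
lemma rho_not_ratio: "0 < m \<Longrightarrow> rho \<noteq> real r / real m"
proof (induction m arbitrary: r rule: less_induct)
  case (less m)
  show ?case
  proof
    assume rho_r: "rho = real r / real m"
    have "0 < real r / real m" using rho_r rho_pos by simp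
    then have r_pos: "0 < real r" using less.prems by (simp add: zero_less_divide_iff)
    have "real r / real m < 1" using rho_r rho_lt_1 by simp
    then have "real r < real m" using less.prems by (simp add: divide_less_eq)
    then have r_lt: "r < m" by simp
    have "rho * (1 + rho) = 1" using rho_sq by (simp add: algebra_simps power2_eq_square)
    moreover have "real r = rho * real m" using rho_r less.prems by (simp add: field_simps)
    ultimately have "real r * (1 + rho) = real m" by (metis mult.commute mult.left_commute mult_1)
    then have "rho = real (m - r) / real r" using r_pos r_lt by (simp add: field_simps of_nat_diff)
    then show False using less.IH[OF r_lt] r_pos by simp
  qed
qed

lemma rho_coords_unique:
  fixes a b c d :: int
  assumes "of_int a + of_int b * rho = of_int c + of_int d * rho"
  shows "a = c \<and> b = d"
proof (cases "b = d")
  case True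
  then show ?thesis using assms by simp
next
  case False
  then have "rho = of_int (a - c) / of_int (d - b)" using assms by (simp add: field_simps)
  then have "rho = \<bar>of_int (a - c) / of_int (d - b)\<bar>" using rho_pos by simp
  then have "rho = real (nat \<bar>a - c\<bar>) / real (nat \<bar>d - b\<bar>)" by (simp add: abs_divide)
  moreover have "0 < nat \<bar>d - b\<bar>" using False by simp
  ultimately show ?thesis using rho_not_ratio by blast
qed

lemma fib_pos: "1 \<le> fibf n"
  by (induction n rule: fibf.induct) auto

lemma fib_gt_0 [simp]: "0 < fibf n" and fib_nonneg [simp]: "0 \<le> fibf n"
  using fib_pos[of n] by simp_all

lemma fib_Suc_mono: "fibf n \<le> fibf (Suc n)"
  by (cases n rule: fibf.cases) (auto simp: fib_pos)

lemma fib_mono: "m \<le> n \<Longrightarrow> fibf m \<le> fibf n"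
  by (induction n rule: dec_induct) (auto intro: order_trans fib_Suc_mono)

lemma fib_Suc_strict: "1 \<le> n \<Longrightarrow> fibf n < fibf (Suc n)"
  by (cases n rule: fibf.cases) (auto simp: fib_pos)

section \<open>Additive weights\<close>

text \<open>Integer coordinates of the powers of rho in the basis 1, rho.\<close>
fun pcoef :: "nat \<Rightarrow> int" where
  "pcoef 0 = 1"
| "pcoef (Suc 0) = 0"
| "pcoef (Suc (Suc n)) = pcoef n - pcoef (Suc n)"

fun qcoef :: "nat \<Rightarrow> int" where
  "qcoef 0 = 0"
| "qcoef (Suc 0) = 1"
| "qcoef (Suc (Suc n)) = qcoef n - qcoef (Suc n)"

lemma rho_pow_coords: "rho ^ k = of_int (pcoef k) + of_int (qcoef k) * rho"
proof (induction k rule: pcoef.induct)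
  case (3 n)
  have "rho ^ Suc (Suc n) = rho ^ n - rho ^ Suc n" using rho_pow_split[of n] by simp
  then show ?case by (simp only: 3) (simp add: algebra_simps)
qed auto

text \<open>A weight obeying the recursion of the powers of rho; such a weight is determined by its
  values at 0 and 1 and induces an additive functional on values.\<close>
definition additive_weight :: "(nat \<Rightarrow> int) \<Rightarrow> bool" where
  "additive_weight v \<longleftrightarrow> (\<forall>k. v k = v (Suc k) + v (Suc (Suc k)))"

lemma additive_weight_step: "additive_weight v \<Longrightarrow> v (Suc (Suc k)) = v k - v (Suc k)"
  unfolding additive_weight_def by (metis add_diff_cancel_left')

lemma additive_weight_coords:
  "additive_weight v \<Longrightarrow> v k = v 0 * pcoef k + v 1 * qcoef k"
proof (induction k rule: pcoef.induct)
  case (3 n)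
  then show ?case using additive_weight_step[OF "3.prems", of n] by (simp add: algebra_simps)
qed auto

lemma additive_weight_exists: "\<exists>v. additive_weight v \<and> v i = a \<and> v (Suc i) = b"
proof (induction i arbitrary: a b)
  case 0
  show ?case
    by (rule exI[of _ "\<lambda>k. a * pcoef k + b * qcoef k"]) (simp add: additive_weight_def algebra_simps)
next
  case (Suc i)
  obtain v where v: "additive_weight v" "v i = a + b" "v (Suc i) = a" using Suc.IH by blast
  then have "v (Suc (Suc i)) = b" using additive_weight_step[OF v(1), of i] by simp
  then show ?case using v by auto
qed

lemma additive_weight_abs_bound:
  assumes "additive_weight v" "\<bar>v n\<bar> \<le> fibf m" "\<bar>v (Suc n)\<bar> \<le> fibf (Suc m)"
  shows "\<bar>v (n + k)\<bar> \<le> fibf (m + k)"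
proof -
  have "\<bar>v (n + k)\<bar> \<le> fibf (m + k) \<and> \<bar>v (Suc (n + k))\<bar> \<le> fibf (Suc (m + k))"
  proof (induction k)
    case 0
    then show ?case using assms(2,3) by simp
  next
    case (Suc k)
    have "v (Suc (Suc (n + k))) = v (n + k) - v (Suc (n + k))"
      by (rule additive_weight_step[OF assms(1)])
    then show ?case using Suc.IH by (simp add: abs_le_iff)
  qed
  then show ?thesis ..
qed

lemma signed_fib_weight: "additive_weight (\<lambda>k. (-1) ^ k * fibf k)"
  unfolding additive_weight_def by (auto simp: algebra_simps)

definition val :: "nat list \<Rightarrow> real" where
  "val xs = (\<Sum>k\<leftarrow>xs. rho ^ k)"

definition cost :: "nat list \<Rightarrow> int" where
  "cost xs = (\<Sum>k\<leftarrow>xs. fibf k)"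

definition wsum :: "(nat \<Rightarrow> int) \<Rightarrow> nat list \<Rightarrow> int" where
  "wsum v xs = (\<Sum>k\<leftarrow>xs. v k)"

lemma admissible_rep_iff:
  "admissible_rep d \<alpha> xs \<longleftrightarrow> sorted xs \<and> \<alpha> = val xs \<and> cost xs \<le> int d"
  unfolding admissible_rep_def val_def cost_def rho_def by simp

lemma val_coords: "val xs = of_int (wsum pcoef xs) + of_int (wsum qcoef xs) * rho"
proof (induction xs)
  case (Cons k xs)
  then show ?case
    using rho_pow_coords[of k] by (simp add: val_def wsum_def algebra_simps del: power_Suc)
qed (simp add: val_def wsum_def)

lemma wsum_coords:
  "additive_weight v \<Longrightarrow> wsum v xs = v 0 * wsum pcoef xs + v 1 * wsum qcoef xs"
proof (induction xs)
  case (Cons k xs)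
  then show ?case
    using additive_weight_coords[OF Cons.prems, of k] by (simp add: wsum_def algebra_simps)
qed (simp add: wsum_def)

lemma wsum_invariant:
  assumes "additive_weight v" "val xs = val ys"
  shows "wsum v xs = wsum v ys"
proof -
  have "wsum pcoef xs = wsum pcoef ys \<and> wsum qcoef xs = wsum qcoef ys"
    using assms(2) val_coords rho_coords_unique by metis
  then show ?thesis using wsum_coords[OF assms(1)] by simp
qed

lemma wsum_cost_lower:
  "(\<And>k. k \<in> set xs \<Longrightarrow> M \<le> v k + fibf k) \<Longrightarrow> M * int (length xs) \<le> wsum v xs + cost xs"
proof (induction xs)
  case (Cons k xs)
  then have "M \<le> v k + fibf k" "M * int (length xs) \<le> wsum v xs + cost xs" by simp_all
  then show ?case by (simp add: wsum_def cost_def algebra_simps)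
qed (simp add: wsum_def cost_def)

lemma wsum_abs_le_cost: "(\<And>k. \<bar>v k\<bar> \<le> fibf k) \<Longrightarrow> \<bar>wsum v xs\<bar> \<le> cost xs"
proof (induction xs)
  case (Cons k xs)
  then have "\<bar>v k\<bar> \<le> fibf k" "\<bar>wsum v xs\<bar> \<le> cost xs" by simp_all
  then show ?case by (simp add: wsum_def cost_def abs_le_iff)
qed (simp add: wsum_def cost_def)

definition quad_list :: "nat \<Rightarrow> nat \<Rightarrow> nat \<Rightarrow> nat \<Rightarrow> nat list" where
  "quad_list i a b c = replicate a i @ replicate b (Suc i) @ replicate c (Suc (Suc i))"

lemma quad_val:
  "val (quad_list i a b c) = real a * rho ^ i + real b * rho ^ Suc i + real c * rho ^ Suc (Suc i)"
  unfolding val_def quad_list_def by (simp add: sum_list_replicate del: power_Suc)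

lemma quad_cost:
  "cost (quad_list i a b c) = int a * fibf i + int b * fibf (Suc i) + int c * fibf (Suc (Suc i))"
  unfolding cost_def quad_list_def by (simp add: sum_list_replicate del: fibf.simps)

lemma quad_wsum:
  "wsum v (quad_list i a b c) = int a * v i + int b * v (Suc i) + int c * v (Suc (Suc i))"
  unfolding wsum_def quad_list_def by (simp add: sum_list_replicate)

lemma quad_length: "length (quad_list i a b c) = a + b + c"
  unfolding quad_list_def by simp

lemma quad_sorted: "sorted (quad_list i a b c)"
  unfolding quad_list_def by (auto simp: sorted_append)

lemma quad_represents_iff:
  "quad_represents (i, a, b, c) \<alpha> \<longleftrightarrow> 1 \<le> a \<and> \<alpha> = val (quad_list i a b c)"
  unfolding quad_represents_def quad_val rho_def by simp

lemma quad_fits_iff: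
  "quad_fits d (i, a, b, c) \<longleftrightarrow>
     int d - 2 * fibf (Suc i) < cost (quad_list i a b c) \<and> cost (quad_list i a b c) \<le> int d"
  unfolding quad_fits_def quad_cost by simp

section \<open>Potentials and the maximal number of terms\<close>

text \<open>The potential of level i: an additive weight with v k + f k = 2 f(i+1) at k = i, i+1, i+2.\<close>
definition potential :: "nat \<Rightarrow> (nat \<Rightarrow> int) \<Rightarrow> bool" where
  "potential i v \<longleftrightarrow> additive_weight v \<and>
     v i = 2 * fibf (Suc i) - fibf i \<and> v (Suc i) = fibf (Suc i)"

lemma potential_exists: "\<exists>v. potential i v"
  unfolding potential_def by (rule additive_weight_exists)

lemma potential_at_quad_level:
  assumes "potential i v"
  shows "v i + fibf i = 2 * fibf (Suc i)"
    and "v (Suc i) + fibf (Suc i) = 2 * fibf (Suc i)"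
    and "v (Suc (Suc i)) + fibf (Suc (Suc i)) = 2 * fibf (Suc i)"
  using assms additive_weight_step[of v i] unfolding potential_def by simp_all

lemma potential_quad:
  assumes "potential i v"
  shows "wsum v (quad_list i a b c) + cost (quad_list i a b c) = 2 * fibf (Suc i) * int (a + b + c)"
proof -
  have "wsum v (quad_list i a b c) + cost (quad_list i a b c) =
      int a * (v i + fibf i) + int b * (v (Suc i) + fibf (Suc i))
      + int c * (v (Suc (Suc i)) + fibf (Suc (Suc i)))"
    unfolding quad_wsum quad_cost by (simp add: algebra_simps del: fibf.simps)
  then show ?thesis unfolding potential_at_quad_level[OF assms] by (simp add: algebra_simps)
qed

text \<open>Above level i, v k + f k grows because v is dominated by f three places back.\<close>
lemma potential_lower_above:
  assumes "potential i v" "i \<le> k"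
  shows "2 * fibf (Suc i) \<le> v k + fibf k"
proof -
  define F where "F = fibf (Suc i)"
  have w: "additive_weight v" and vi: "v i = 2 * F - fibf i" and vi1: "v (Suc i) = F"
    using assms(1) unfolding potential_def F_def by auto
  have fi_le: "fibf i \<le> F" unfolding F_def by (rule fib_Suc_mono)
  have v2: "v (Suc (Suc i)) = F - fibf i" using additive_weight_step[OF w, of i] vi vi1 by simp
  have v3: "v (Suc (Suc (Suc i))) = fibf i" using additive_weight_step[OF w, of "Suc i"] v2 vi1 by simp
  have v4: "v (Suc (Suc (Suc (Suc i)))) = F - 2 * fibf i"
    using additive_weight_step[OF w, of "Suc (Suc i)"] v2 v3 by simp
  have tail: "\<bar>v (Suc (Suc (Suc i)) + m)\<bar> \<le> fibf (i + m)" for m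
    using additive_weight_abs_bound[OF w, of "Suc (Suc (Suc i))" i m] v3 v4 fi_le
    by (simp add: F_def abs_le_iff)
  consider "k = i" | "k = Suc i" | "k = Suc (Suc i)" | m where "k = Suc (Suc (Suc i)) + m"
    using assms(2) by (metis add.commute le_Suc_eq le_add_diff_inverse le_antisym not_less_eq_eq)
  then show ?thesis
  proof cases
    case 4
    have "fibf k = 2 * fibf (Suc (i + m)) + fibf (i + m)" using 4 by simp
    moreover have "F \<le> fibf (Suc (i + m))" unfolding F_def by (rule fib_mono) simp
    ultimately show ?thesis using tail[of m] 4 F_def by (simp add: abs_le_iff)
  qed (use potential_at_quad_level[OF assms(1)] in auto)
qed

text \<open>Below level i, going down one place strictly increases v k + f k, since
  U k = U (k+1) + U (k+2) - 2 f(k+1) with U k = v k + f k and f(k+1) < f(i+1).\<close>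
lemma potential_lower_below:
  assumes "potential i v" "n \<le> i"
  shows "2 * fibf (Suc i) \<le> v n + fibf n \<and> 2 * fibf (Suc i) \<le> v (Suc n) + fibf (Suc n)
    \<and> (n < i \<longrightarrow> 2 * fibf (Suc i) < v n + fibf n)"
  using assms(2)
proof (induction n rule: inc_induct)
  case base
  then show ?case using potential_at_quad_level[OF assms(1)] by simp
next
  case (step n)
  have "v n = v (Suc n) + v (Suc (Suc n))"
    using assms(1) unfolding potential_def additive_weight_def by blast
  then have U_rec: "v n + fibf n =
      (v (Suc n) + fibf (Suc n)) + (v (Suc (Suc n)) + fibf (Suc (Suc n))) - 2 * fibf (Suc n)"
    by simp
  have "fibf (Suc n) \<le> fibf i" using step.hyps by (intro fib_mono) simp
  also have "fibf i < fibf (Suc i)" using step.hyps by (intro fib_Suc_strict) simp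
  finally show ?case using U_rec step.IH by linarith
qed

lemma potential_lower:
  assumes "potential i v"
  shows "2 * fibf (Suc i) \<le> v k + fibf k"
    and "k < i \<Longrightarrow> 2 * fibf (Suc i) < v k + fibf k"
  using potential_lower_above[OF assms] potential_lower_below[OF assms, of k] by force+

lemma potential_gap:
  assumes "potential i v" "val ys = val (quad_list i a b c)"
  shows "2 * fibf (Suc i) * int (length ys) + cost (quad_list i a b c)
    \<le> 2 * fibf (Suc i) * int (a + b + c) + cost ys"
proof -
  have "2 * fibf (Suc i) * int (length ys) \<le> wsum v ys + cost ys"
    using potential_lower(1)[OF assms(1)] by (intro wsum_cost_lower)
  moreover have "wsum v ys = wsum v (quad_list i a b c)"
    using assms potential_def wsum_invariant by blast
  ultimately show ?thesis using potential_quad[OF assms(1), of a b c] by simp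
qed

lemma quad_length_maximal:
  assumes "val ys = val (quad_list i a b c)"
    and "cost ys < cost (quad_list i a b c) + 2 * fibf (Suc i)"
  shows "length ys \<le> a + b + c"
proof -
  obtain v where "potential i v" using potential_exists by blast
  from potential_gap[OF this assms(1)] assms(2)
  have "2 * fibf (Suc i) * int (length ys) < 2 * fibf (Suc i) * int (a + b + c + 1)"
    by (simp add: algebra_simps)
  then have "int (length ys) < int (a + b + c + 1)"
    using mult_less_cancel_left_pos[of "2 * fibf (Suc i)"] by simp
  then show ?thesis by simp
qed

section \<open>Uniqueness of the fitting quad\<close>

text \<open>At a common level, the weights with (v i, v (i+1)) = (1, 0) and (0, 1) recover a + c and
  b - c, and the lengths agree by maximality.\<close>
lemma fitting_quads_same_level:
  assumes val_eq: "val (quad_list i a b c) = val (quad_list i a' b' c')"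
    and "cost (quad_list i a' b' c') < cost (quad_list i a b c) + 2 * fibf (Suc i)"
    and "cost (quad_list i a b c) < cost (quad_list i a' b' c') + 2 * fibf (Suc i)"
  shows "a = a' \<and> b = b' \<and> c = c'"
proof -
  have len: "a + b + c = a' + b' + c'"
    using quad_length_maximal[OF val_eq[symmetric] assms(2)]
      quad_length_maximal[OF val_eq assms(3)] by (simp add: quad_length)
  obtain v where v: "additive_weight v" "v i = 1" "v (Suc i) = 0"
    using additive_weight_exists by blast
  obtain w where w: "additive_weight w" "w i = 0" "w (Suc i) = 1"
    using additive_weight_exists by blast
  have "wsum v (quad_list i a b c) = wsum v (quad_list i a' b' c')"
    and "wsum w (quad_list i a b c) = wsum w (quad_list i a' b' c')"
    using wsum_invariant v(1) w(1) val_eq by blast+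
  then have "int a + int c = int a' + int c'" "int b - int c = int b' - int c'"
    using v w additive_weight_step[OF v(1), of i] additive_weight_step[OF w(1), of i]
    unfolding quad_wsum by simp_all
  then show ?thesis using len by linarith
qed

text \<open>Fitting quads at levels i < j are impossible: the level-i potential gives
  cost(quad i) <= cost(quad j), the level-j potential (strict below j) the reverse strictly.\<close>
lemma fitting_quads_different_levels:
  assumes "i < j" "1 \<le> a"
    and val_eq: "val (quad_list i a b c) = val (quad_list j a' b' c')"
    and fit_i: "cost (quad_list j a' b' c') < cost (quad_list i a b c) + 2 * fibf (Suc i)"
    and fit_j: "cost (quad_list i a b c) < cost (quad_list j a' b' c') + 2 * fibf (Suc j)"
  shows False
proof -
  define C1 where "C1 = cost (quad_list i a b c)"
  define C2 where "C2 = cost (quad_list j a' b' c')"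
  define F where "F = fibf (Suc j)"
  have len: "a + b + c = a' + b' + c'"
    using quad_length_maximal[OF val_eq[symmetric] fit_i]
      quad_length_maximal[OF val_eq fit_j] by (simp add: quad_length)
  obtain v where "potential i v" using potential_exists by blast
  from potential_gap[OF this val_eq[symmetric]] have "C1 \<le> C2"
    unfolding C1_def C2_def quad_length len by simp
  obtain w where w: "potential j w" using potential_exists by blast
  have "int a * (2 * F) < int a * (w i + fibf i)"
    using potential_lower(2)[OF w assms(1)] assms(2) F_def by simp
  moreover have "int b * (2 * F) \<le> int b * (w (Suc i) + fibf (Suc i))"
    using potential_lower(1)[OF w] F_def by (simp add: mult_left_mono)
  moreover have "int c * (2 * F) \<le> int c * (w (Suc (Suc i)) + fibf (Suc (Suc i)))"
    using potential_lower(1)[OF w, of "Suc (Suc i)"] F_def by (simp add: mult_left_mono del: fibf.simps)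
  ultimately have "2 * F * int (a + b + c) < wsum w (quad_list i a b c) + C1"
    unfolding C1_def quad_wsum quad_cost by (simp add: algebra_simps del: fibf.simps)
  moreover have "wsum w (quad_list i a b c) = wsum w (quad_list j a' b' c')"
    using w val_eq potential_def wsum_invariant by blast
  ultimately have "C2 < C1"
    using potential_quad[OF w, of a' b' c'] len unfolding C2_def F_def by simp
  with \<open>C1 \<le> C2\<close> show False by simp
qed

lemma fitting_quad_unique:
  assumes "quad_represents q1 \<alpha> \<and> quad_fits d q1" "quad_represents q2 \<alpha> \<and> quad_fits d q2"
  shows "q1 = q2"
proof -
  obtain i a b c j a' b' c' where q: "q1 = (i, a, b, c)" "q2 = (j, a', b', c')"
    by (cases q1, cases q2) auto
  have A: "1 \<le> a" "\<alpha> = val (quad_list i a b c)"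
      "int d - 2 * fibf (Suc i) < cost (quad_list i a b c)" "cost (quad_list i a b c) \<le> int d"
    using assms(1) unfolding q quad_represents_iff quad_fits_iff by auto
  have B: "1 \<le> a'" "\<alpha> = val (quad_list j a' b' c')"
      "int d - 2 * fibf (Suc j) < cost (quad_list j a' b' c')" "cost (quad_list j a' b' c') \<le> int d"
    using assms(2) unfolding q quad_represents_iff quad_fits_iff by auto
  consider "i < j" | "j < i" | "i = j" by linarith
  then show ?thesis
  proof cases
    case 1
    then show ?thesis using fitting_quads_different_levels[OF 1 A(1)] A B by force
  next
    case 2
    then show ?thesis
      using fitting_quads_different_levels[OF 2 B(1), of b' c' a b c] A(2-4) B(2-4) by simp
  next
    case 3
    then show ?thesis using fitting_quads_same_level[of i a b c a' b' c'] A B q by force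
  qed
qed

section \<open>Existence of a fitting quad\<close>

text \<open>Moving a two-term combination up one level at a time, A rho^k + B rho^(k+1) =
  (A + B) rho^(k+1) + A rho^(k+2), never decreases the leading coefficient.\<close>
lemma two_term_lift:
  assumes "k \<le> K"
  shows "\<exists>A' B'. A \<le> A' \<and>
    real A * rho ^ k + real B * rho ^ Suc k = real A' * rho ^ K + real B' * rho ^ Suc K"
  using assms
proof (induction K rule: dec_induct)
  case base
  then show ?case by blast
next
  case (step K)
  then obtain A' B' where AB: "A \<le> A'"
    "real A * rho ^ k + real B * rho ^ Suc k = real A' * rho ^ K + real B' * rho ^ Suc K"
    by blast
  have "real A' * rho ^ K + real B' * rho ^ Suc K =
      real (A' + B') * rho ^ Suc K + real A' * rho ^ Suc (Suc K)"
    using rho_pow_split[of K] by (simp add: algebra_simps del: power_Suc)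
  then show ?case using AB by (intro exI[of _ "A' + B'"] exI[of _ A']) simp
qed

lemma val_at_level:
  assumes "\<And>k. k \<in> set xs \<Longrightarrow> k \<le> K"
  shows "\<exists>A B. length xs \<le> A \<and> val xs = real A * rho ^ K + real B * rho ^ Suc K"
  using assms
proof (induction xs)
  case Nil
  show ?case by (rule exI[of _ 0], rule exI[of _ 0]) (simp add: val_def)
next
  case (Cons k xs)
  obtain A1 B1 where 1: "1 \<le> A1" "rho ^ k = real A1 * rho ^ K + real B1 * rho ^ Suc K"
    using two_term_lift[of k K 1 0] Cons.prems by auto
  obtain A2 B2 where 2: "length xs \<le> A2" "val xs = real A2 * rho ^ K + real B2 * rho ^ Suc K"
    using Cons by auto
  have "val (k # xs) = real (A1 + A2) * rho ^ K + real (B1 + B2) * rho ^ Suc K"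
    using 1 2 by (simp add: val_def algebra_simps del: power_Suc)
  then show ?case using 1 2 by (intro exI[of _ "A1 + A2"] exI[of _ "B1 + B2"]) simp
qed

lemma quad_at_top:
  assumes "xs \<noteq> []"
  shows "\<exists>a b c. quad_represents (Max (set xs), a, b, c) (val xs)"
proof -
  obtain A B where "length xs \<le> A"
    "val xs = real A * rho ^ Max (set xs) + real B * rho ^ Suc (Max (set xs))"
    using val_at_level[of xs "Max (set xs)"] by auto
  moreover have "1 \<le> length xs" using assms by (simp add: Suc_le_eq)
  ultimately have "quad_represents (Max (set xs), A, B, 0) (val xs)"
    unfolding quad_represents_iff quad_val by simp
  then show ?thesis by blast
qed

text \<open>Merging rho^(i+1) + rho^(i+2) into rho^i as often as possible.\<close>
lemma quad_normal_form:
  assumes "quad_represents (i, a, b, c) \<alpha>"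
  obtains a' b' c' where "quad_represents (i, a', b', c') \<alpha>" "b' = 0 \<or> c' = 0"
proof -
  define t where "t = min b c"
  have "val (quad_list i (a + t) (b - t) (c - t)) = val (quad_list i a b c)"
    using rho_pow_split[of i] unfolding quad_val t_def
    by (simp add: of_nat_diff algebra_simps del: power_Suc)
  then have "quad_represents (i, a + t, b - t, c - t) \<alpha>"
    using assms unfolding quad_represents_iff by simp
  moreover have "b - t = 0 \<or> c - t = 0" unfolding t_def by linarith
  ultimately show ?thesis by (rule that)
qed

lemma quad_descend:
  assumes "quad_represents (Suc j, a, b, 0) \<alpha>" "1 \<le> b"
  shows "\<exists>a' b' c'. quad_represents (j, a', b', c') \<alpha>"
proof -
  define m where "m = min a b"
  have "val (quad_list j m (a - m) (b - m)) = val (quad_list (Suc j) a b 0)"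
    using rho_pow_split[of j] unfolding quad_val m_def
    by (simp add: of_nat_diff algebra_simps del: power_Suc)
  moreover have "1 \<le> m" using assms unfolding quad_represents_iff m_def by simp
  ultimately have "quad_represents (j, m, a - m, b - m) \<alpha>"
    using assms(1) unfolding quad_represents_iff by simp
  then show ?thesis by blast
qed

text \<open>For quads without middle terms the signed weight (-1)^k f k measures the cost exactly.\<close>
lemma quad_no_middle_cheapest:
  assumes "val ys = val (quad_list i a 0 c)"
  shows "cost (quad_list i a 0 c) \<le> cost ys"
proof -
  let ?v = "\<lambda>k. (-1) ^ k * fibf k"
  have "wsum ?v (quad_list i a 0 c) = (-1) ^ i * cost (quad_list i a 0 c)"
    unfolding quad_wsum quad_cost by (simp add: algebra_simps del: fibf.simps)
  moreover have "0 \<le> cost (quad_list i a 0 c)" unfolding quad_cost by simp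
  ultimately have "cost (quad_list i a 0 c) = \<bar>wsum ?v (quad_list i a 0 c)\<bar>"
    by (simp add: abs_mult power_abs)
  also have "\<dots> = \<bar>wsum ?v ys\<bar>" using wsum_invariant[OF signed_fib_weight assms] by simp
  also have "\<dots> \<le> cost ys" by (rule wsum_abs_le_cost) (simp add: abs_mult power_abs)
  finally show ?thesis .
qed

text \<open>At level 0 the weight with v 0 = v 1 = 1 measures the cost of (0; a, b, 0) exactly.\<close>
lemma quad_level_0_cheapest:
  assumes "val ys = val (quad_list 0 a b 0)"
  shows "cost (quad_list 0 a b 0) \<le> cost ys"
proof -
  obtain v where v: "additive_weight v" "v 0 = 1" "v 1 = 1"
    using additive_weight_exists[of 0 1 1] by auto
  have bound: "\<bar>v k\<bar> \<le> fibf k" for k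
    using additive_weight_abs_bound[OF v(1), of 0 0 k] v by simp
  have "cost (quad_list 0 a b 0) = wsum v (quad_list 0 a b 0)"
    unfolding quad_wsum quad_cost using v by simp
  also have "\<dots> = wsum v ys" using wsum_invariant[OF v(1) assms] by simp
  also have "\<dots> \<le> cost ys" using wsum_abs_le_cost[OF bound, of ys] by simp
  finally show ?thesis .
qed

text \<open>A quad at the lowest possible level, in normal form, is no more expensive than any
  representation of the same value.\<close>
lemma cheap_quad_exists:
  assumes "xs \<noteq> []"
  shows "\<exists>i a b c. quad_represents (i, a, b, c) (val xs) \<and> cost (quad_list i a b c) \<le> cost xs"
proof -
  define level where "level i \<longleftrightarrow> (\<exists>a b c. quad_represents (i, a, b, c) (val xs))" for i
  define i0 where "i0 = (LEAST i. level i)"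
  have "level (Max (set xs))" using quad_at_top[OF assms] unfolding level_def .
  then have "level i0" unfolding i0_def by (rule LeastI)
  then obtain a b c where "quad_represents (i0, a, b, c) (val xs)"
    unfolding level_def by blast
  then obtain a b c where q: "quad_represents (i0, a, b, c) (val xs)" "b = 0 \<or> c = 0"
    by (rule quad_normal_form)
  have val_eq: "val xs = val (quad_list i0 a b c)"
    using q(1) unfolding quad_represents_iff by simp
  have "cost (quad_list i0 a b c) \<le> cost xs"
  proof (cases "b = 0")
    case True
    then show ?thesis using quad_no_middle_cheapest[of xs i0 a c] val_eq by simp
  next
    case False
    then have c0: "c = 0" using q(2) by simp
    show ?thesis
    proof (cases i0)
      case 0
      then show ?thesis using quad_level_0_cheapest[of xs a b] val_eq c0 by simp
    next
      case (Suc j)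
      then have "level j"
        using quad_descend[of j a b "val xs"] q(1) c0 False unfolding level_def by simp
      then have "i0 \<le> j" unfolding i0_def by (rule Least_le)
      then show ?thesis using Suc by simp
    qed
  qed
  then show ?thesis using q(1) by blast
qed

text \<open>Splitting one term rho^i into rho^(i+1) + rho^(i+2) raises the cost by 2 f(i+1).\<close>
lemma quad_raise:
  assumes "quad_represents (i, a, b, c) \<alpha>"
  obtains i' a' b' c' where "quad_represents (i', a', b', c') \<alpha>"
    "cost (quad_list i' a' b' c') = cost (quad_list i a b c) + 2 * fibf (Suc i)"
proof (cases "a = 1")
  case True
  have "val (quad_list (Suc i) (Suc b) (Suc c) 0) = val (quad_list i a b c)"
    unfolding quad_val using True rho_pow_split[of i] by (simp add: algebra_simps del: power_Suc)
  moreover have "cost (quad_list (Suc i) (Suc b) (Suc c) 0) = cost (quad_list i a b c) + 2 * fibf (Suc i)"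
    unfolding quad_cost using True by (simp add: algebra_simps)
  ultimately have "quad_represents (Suc i, Suc b, Suc c, 0) \<alpha>"
      and "cost (quad_list (Suc i) (Suc b) (Suc c) 0) = cost (quad_list i a b c) + 2 * fibf (Suc i)"
    using assms unfolding quad_represents_iff by simp_all
  then show ?thesis by (rule that)
next
  case False
  then have a2: "2 \<le> a" using assms unfolding quad_represents_iff by simp
  have "val (quad_list i (a - 1) (Suc b) (Suc c)) = val (quad_list i a b c)"
    unfolding quad_val using a2 rho_pow_split[of i]
    by (simp add: of_nat_diff algebra_simps del: power_Suc)
  moreover have "cost (quad_list i (a - 1) (Suc b) (Suc c)) = cost (quad_list i a b c) + 2 * fibf (Suc i)"
    unfolding quad_cost using a2 by (simp add: of_nat_diff algebra_simps)
  ultimately have "quad_represents (i, a - 1, Suc b, Suc c) \<alpha>"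
      and "cost (quad_list i (a - 1) (Suc b) (Suc c)) = cost (quad_list i a b c) + 2 * fibf (Suc i)"
    using assms a2 unfolding quad_represents_iff by simp_all
  then show ?thesis by (rule that)
qed

lemma fitting_quad_exists:
  assumes "quad_represents (i, a, b, c) \<alpha>" "cost (quad_list i a b c) \<le> int d"
  shows "\<exists>q. quad_represents q \<alpha> \<and> quad_fits d q"
  using assms
proof (induction "nat (int d - cost (quad_list i a b c))" arbitrary: i a b c rule: less_induct)
  case less
  show ?case
  proof (cases "quad_fits d (i, a, b, c)")
    case True
    then show ?thesis using less.prems by blast
  next
    case False
    then have room: "cost (quad_list i a b c) + 2 * fibf (Suc i) \<le> int d"
      using less.prems(2) unfolding quad_fits_iff by simp
    obtain i' a' b' c' where q': "quad_represents (i', a', b', c') \<alpha>"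
      "cost (quad_list i' a' b' c') = cost (quad_list i a b c) + 2 * fibf (Suc i)"
      using quad_raise[OF less.prems(1)] by blast
    have "nat (int d - cost (quad_list i' a' b' c')) < nat (int d - cost (quad_list i a b c))"
      using q'(2) room fib_gt_0[of "Suc i"] by (subst zless_nat_conj) linarith
    then show ?thesis using less.hyps[OF _ q'(1)] q'(2) room by simp
  qed
qed

lemma s_eq_fitting_quad:
  assumes "quad_represents (i, a, b, c) \<alpha>" "quad_fits d (i, a, b, c)"
  shows "s d \<alpha> = a + b + c"
  unfolding s_def
proof (rule Greatest_equality)
  show "\<exists>xs. admissible_rep d \<alpha> xs \<and> length xs = a + b + c"
    using assms quad_sorted quad_length
    unfolding admissible_rep_iff quad_represents_iff quad_fits_iff by blast
next
  fix n
  assume "\<exists>xs. admissible_rep d \<alpha> xs \<and> length xs = n"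
  then obtain ys where "\<alpha> = val ys" "cost ys \<le> int d" "length ys = n"
    unfolding admissible_rep_iff by blast
  then show "n \<le> a + b + c"
    using assms quad_length_maximal[of ys i a b c]
    unfolding quad_represents_iff quad_fits_iff by force
qed

theorem mainTheorem17:
  fixes d :: nat and \<alpha> :: real
  assumes "d \<ge> 1" and "\<alpha> \<in> E d" and "\<alpha> \<noteq> 0"
  shows "(\<exists>!q. quad_represents q \<alpha> \<and> quad_fits d q) \<and>
         (\<forall>i a b c. quad_represents (i, a, b, c) \<alpha> \<and> quad_fits d (i, a, b, c)
             \<longrightarrow> s d \<alpha> = a + b + c)"
proof -
  obtain xs where xs: "\<alpha> = val xs" "cost xs \<le> int d"
    using assms(2) unfolding E_def admissible_rep_iff by blast
  then have "xs \<noteq> []" using assms(3) by (auto simp: val_def)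
  then obtain i a b c where "quad_represents (i, a, b, c) \<alpha>" "cost (quad_list i a b c) \<le> int d"
    using cheap_quad_exists xs by (metis order_trans)
  then have "\<exists>q. quad_represents q \<alpha> \<and> quad_fits d q" by (rule fitting_quad_exists)
  then have "\<exists>!q. quad_represents q \<alpha> \<and> quad_fits d q"
    using fitting_quad_unique by (rule ex_ex1I)
  moreover have "\<forall>i a b c. quad_represents (i, a, b, c) \<alpha> \<and> quad_fits d (i, a, b, c)
      \<longrightarrow> s d \<alpha> = a + b + c"
    using s_eq_fitting_quad by blast
  ultimately show ?thesis ..
qed

end
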